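(* Let $\mathbb{F}$ be a field, let $n\ge 1$, and let $G$ be a finite subgroup of $\mathrm{M}(n,\mathbb{F})$ whose permutation part $\phi(G)$ is a transitive subgroup of $\mathrm{Sym}(n)$. Then $G$ is $\mathrm{M}(n,\mathbb{F})$-conjugate to a subgroup of $\widetilde{\mathrm{M}}(n,\mathbb{F})$.
   Context: $\mathrm{M}(n,\mathbb{F})$ denotes the group of monomial matrices in $\mathrm{GL}(n,\mathbb{F})$; it splits as $\mathrm{D}(n,\mathbb{F})\rtimes \mathrm{P}(n)$, where $\mathrm{D}(n,\mathbb{F})$ is the group of invertible diagonal matrices and $\mathrm{P}(n)$ the group of permutation matrices, identified with $\mathrm{Sym}(n)$ via $\alpha\mapsto[\delta_{i\alpha,j}]_{i,j}$. The map $\phi\colon \mathrm{M}(n,\mathbb{F})\to\mathrm{Sym}(n)$ is $dt\mapsto t$ for $d\in\mathrm{D}(n,\mathbb{F})$, $t\in \mathrm{P}(n)$; $\phi(G)$ is called the permutation part of $G$. $\widetilde{\mathrm{M}}(n,\mathbb{F})$ denotes the group of all $n\times n$ monomial matrices whose non-zero entries are roots of unity in $\mathbb{F}$. *)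

theory Defs
  imports "HOL-Analysis.Analysis"
begin

text \<open>n = CARD('n); matrices over a field 'a are 'a^'n^'n.
  Sym(n) is the set of permutations of UNIV :: 'n set.\<close>

definition perm_mat :: "('n::finite \<Rightarrow> 'n) \<Rightarrow> 'a::semiring_1^'n^'n" where
  "perm_mat \<alpha> = (\<chi> i j. if \<alpha> i = j then 1 else 0)"

definition diag_inv_mat :: "'a::field^'n::finite^'n \<Rightarrow> bool" where
  "diag_inv_mat d \<longleftrightarrow> (\<forall>i j. i \<noteq> j \<longrightarrow> d $ i $ j = 0) \<and> invertible d"

definition monomial_mats :: "('a::field^'n::finite^'n) set" where
  "monomial_mats = {A. \<exists>d t. diag_inv_mat d \<and> t permutes (UNIV::'n set) \<and> A = d ** perm_mat t}"

definition phi :: "'a::field^'n::finite^'n \<Rightarrow> ('n \<Rightarrow> 'n)" where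
  "phi A = (THE t. t permutes (UNIV::'n set) \<and> (\<exists>d. diag_inv_mat d \<and> A = d ** perm_mat t))"

definition monomial_roots_mats :: "('a::field^'n::finite^'n) set" where
  "monomial_roots_mats = {A \<in> monomial_mats.
     \<forall>i j. A $ i $ j \<noteq> 0 \<longrightarrow> (\<exists>k::nat. k > 0 \<and> A $ i $ j ^ k = 1)}"

definition transitive_perms :: "('n::finite \<Rightarrow> 'n) set \<Rightarrow> bool" where
  "transitive_perms S \<longleftrightarrow> (\<forall>i j. \<exists>\<alpha>\<in>S. \<alpha> i = j)"

end

theory Submission
  imports Defs
begin

text \<open>Fix a base point i0 and, by transitivity, elements h_j of G whose permutation part
  sends i0 to j. Conjugating by the diagonal matrix with entries 1 / (h_j)[i0, j] turns the
  nonzero entry (i, t i) of g, where t = phi g, into the (i0, i0) entry of h_i g h_(t i)^-1.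
  This element of G fixes i0, and on the stabiliser of i0 the (i0, i0) entry is
  multiplicative; since G is finite, its powers repeat, so it is a root of unity.\<close>

lemma matrix_mul_entry_row_supported:
  fixes A :: "'a::semiring_1^'m::finite^'k" and B :: "'a^'l^'m"
  assumes "\<And>j. j \<noteq> c \<Longrightarrow> A$i$j = 0"
  shows "(A ** B)$i$k = A$i$c * B$c$k"
proof -
  have "(\<Sum>j\<in>UNIV. A$i$j * B$j$k) = (\<Sum>j\<in>UNIV. if c = j then A$i$c * B$c$k else 0)"
    by (rule sum.cong) (auto simp: assms)
  then show ?thesis
    by (simp add: matrix_matrix_mult_def)
qed

definition diag_mat :: "('n::finite \<Rightarrow> 'a::zero) \<Rightarrow> 'a^'n^'n" where
  "diag_mat c = (\<chi> i j. if i = j then c i else 0)"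

lemma diag_mat_entry: "diag_mat c $ i $ j = (if i = j then c i else 0)"
  by (simp add: diag_mat_def)

lemma diag_mat_mult_entry: "(diag_mat a ** A)$i$k = a i * A$i$k"
  by (subst matrix_mul_entry_row_supported[where c = i]) (auto simp: diag_mat_entry)

lemma mult_diag_mat_entry: "(A ** diag_mat b)$i$k = A$i$k * (b k :: 'a::semiring_1)"
  unfolding matrix_matrix_mult_def diag_mat_def by (auto simp: if_distrib cong: if_cong)

lemma diag_inv_mat_iff:
  "diag_inv_mat d \<longleftrightarrow> (\<forall>i j. i \<noteq> j \<longrightarrow> d$i$j = 0) \<and> (\<forall>i. d$i$i \<noteq> 0)"
  unfolding diag_inv_mat_def invertible_det_nz by (auto simp: det_diagonal)

lemma diag_inv_mat_diag_mat: "diag_inv_mat (diag_mat c) \<longleftrightarrow> (\<forall>i. c i \<noteq> 0)"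
  by (auto simp: diag_inv_mat_iff diag_mat_entry)

definition monomial_pattern :: "('n::finite \<Rightarrow> 'n) \<Rightarrow> 'a::zero^'n^'n \<Rightarrow> bool" where
  "monomial_pattern t A \<longleftrightarrow> (\<forall>i j. A$i$j \<noteq> 0 \<longleftrightarrow> j = t i)"

lemma monomial_pattern_unique: "monomial_pattern s A \<Longrightarrow> monomial_pattern t A \<Longrightarrow> s = t"
  unfolding monomial_pattern_def by (metis ext)

lemma monomial_pattern_row_supported: "monomial_pattern t A \<Longrightarrow> j \<noteq> t i \<Longrightarrow> A$i$j = 0"
  unfolding monomial_pattern_def by blast

lemma monomial_pattern_nonzero: "monomial_pattern t A \<Longrightarrow> A$i$(t i) \<noteq> 0"
  by (simp add: monomial_pattern_def)

lemma monomial_pattern_diag_mult_perm_mat: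
  assumes "diag_inv_mat d"
  shows "monomial_pattern t (d ** perm_mat t)"
proof -
  have "(d ** perm_mat t)$i$j = (if t i = j then d$i$i else 0)" for i j
    using assms by (subst matrix_mul_entry_row_supported[where c = i])
      (auto simp: diag_inv_mat_iff perm_mat_def)
  then show ?thesis
    using assms by (auto simp: monomial_pattern_def diag_inv_mat_iff)
qed

lemma monomial_mats_iff_pattern:
  "A \<in> monomial_mats \<longleftrightarrow> (\<exists>t. t permutes UNIV \<and> monomial_pattern t A)"
proof
  assume "A \<in> monomial_mats"
  then show "\<exists>t. t permutes UNIV \<and> monomial_pattern t A"
    unfolding monomial_mats_def using monomial_pattern_diag_mult_perm_mat by blast
next
  assume "\<exists>t. t permutes UNIV \<and> monomial_pattern t A"
  then obtain t where t: "t permutes UNIV" "monomial_pattern t A" by blast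
  let ?d = "diag_mat (\<lambda>i. A$i$(t i))"
  have "diag_inv_mat ?d"
    using t(2) by (simp add: diag_inv_mat_diag_mat monomial_pattern_nonzero)
  moreover have "A = ?d ** perm_mat t"
    using t(2) by (auto simp: vec_eq_iff diag_mat_mult_entry perm_mat_def monomial_pattern_row_supported)
  ultimately show "A \<in> monomial_mats"
    unfolding monomial_mats_def using t(1) by blast
qed

lemma phi_monomial_pattern:
  assumes "A \<in> monomial_mats"
  shows "phi A permutes UNIV" and "monomial_pattern (phi A) A"
proof -
  obtain d t where dt: "diag_inv_mat d" "t permutes UNIV" "A = d ** perm_mat t"
    using assms unfolding monomial_mats_def by blast
  have "phi A = t"
    unfolding phi_def
  proof (rule the_equality)
    show "t permutes UNIV \<and> (\<exists>d. diag_inv_mat d \<and> A = d ** perm_mat t)"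
      using dt by blast
  next
    fix s assume "s permutes UNIV \<and> (\<exists>d. diag_inv_mat d \<and> A = d ** perm_mat s)"
    then show "s = t"
      using dt monomial_pattern_diag_mult_perm_mat monomial_pattern_unique by metis
  qed
  then show "phi A permutes UNIV" "monomial_pattern (phi A) A"
    using dt monomial_pattern_diag_mult_perm_mat by auto
qed

lemma monomial_pattern_mult_entry:
  "monomial_pattern s A \<Longrightarrow> (A ** B)$i$k = A$i$(s i) * B$(s i)$k"
  by (rule matrix_mul_entry_row_supported) (simp add: monomial_pattern_row_supported)

lemma monomial_pattern_mult:
  fixes A B :: "'a::{semiring_1,semiring_no_zero_divisors}^'n::finite^'n"
  assumes "monomial_pattern s A" "monomial_pattern t B"
  shows "monomial_pattern (t \<circ> s) (A ** B)"
  using assms by (auto simp: monomial_pattern_def monomial_pattern_mult_entry[OF assms(1)])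

lemma matrix_inv_eqI:
  fixes A B :: "'a::field^'n::finite^'n"
  assumes "A ** B = mat 1"
  shows "matrix_inv A = B"
proof -
  have BA: "B ** A = mat 1"
    using assms matrix_left_right_inverse by blast
  have "A ** matrix_inv A = mat 1 \<and> matrix_inv A ** A = mat 1"
    unfolding matrix_inv_def by (rule someI[of _ B]) (use assms BA in blast)
  then have "B ** (A ** matrix_inv A) = B"
    by simp
  then show ?thesis
    by (simp add: matrix_mul_assoc BA)
qed

lemma matrix_inv_monomial:
  fixes A :: "'a::field^'n::finite^'n"
  assumes "monomial_pattern s A" "s permutes UNIV"
  shows "matrix_inv A = (\<chi> i j. if s j = i then inverse (A$j$i) else 0)"
proof (rule matrix_inv_eqI)
  have "inj s"
    using assms(2) permutes_inj by blast
  then show "A ** (\<chi> i j. if s j = i then inverse (A$j$i) else 0) = mat 1"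
    using assms(1) by (auto simp: vec_eq_iff mat_def monomial_pattern_mult_entry
        monomial_pattern_nonzero dest: injD)
qed

lemma matrix_inv_monomial_pattern:
  fixes A :: "'a::field^'n::finite^'n"
  assumes "monomial_pattern s A" "s permutes UNIV"
  shows "monomial_pattern (inv s) (matrix_inv A)"
    and "matrix_inv A $ s i $ i = inverse (A$i$(s i))"
  using assms by (auto simp: matrix_inv_monomial[OF assms] monomial_pattern_def permutes_inv_eq
      permutes_inverses)

lemma monomial_pattern_diag_mat: "(\<And>i. c i \<noteq> 0) \<Longrightarrow> monomial_pattern id (diag_mat c)"
  by (auto simp: monomial_pattern_def diag_mat_entry)

lemma diag_mat_in_monomial_mats: "(\<And>i. c i \<noteq> 0) \<Longrightarrow> diag_mat c \<in> monomial_mats"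
  using monomial_pattern_diag_mat monomial_mats_iff_pattern permutes_id by blast

lemma matrix_inv_diag_mat:
  fixes c :: "'n::finite \<Rightarrow> 'a::field"
  assumes "\<And>i. c i \<noteq> 0"
  shows "matrix_inv (diag_mat c) = diag_mat (\<lambda>i. inverse (c i))"
  by (rule matrix_inv_eqI) (simp add: vec_eq_iff diag_mat_mult_entry mat_def diag_mat_entry assms)

lemma monomial_roots_matsI:
  assumes "t permutes UNIV" "monomial_pattern t A" "\<And>i. \<exists>m>0. A$i$(t i) ^ m = 1"
  shows "A \<in> monomial_roots_mats"
  using assms by (auto simp: monomial_roots_mats_def monomial_mats_iff_pattern monomial_pattern_def)

lemma power_eq_one_if_finite_powers:
  fixes e :: "'a::field"
  assumes "e \<noteq> 0" "finite (range (power e))"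
  shows "\<exists>m>0. e ^ m = 1"
proof -
  have "\<not> inj (power e)"
    using assms(2) finite_imageD infinite_UNIV_nat by blast
  then obtain a b where "a < b" "e ^ a = e ^ b"
    unfolding inj_def by (metis linorder_neqE_nat)
  moreover have "e ^ a * e ^ (b - a) = e ^ b"
    using \<open>a < b\<close> by (simp flip: power_add)
  ultimately show ?thesis
    using assms(1) by (metis mult_cancel_left1 power_not_zero zero_less_diff)
qed

locale finite_monomial_group =
  fixes G :: "('a::field^'n::finite^'n) set"
  assumes finite: "finite G"
    and monomial: "G \<subseteq> monomial_mats"
    and one_closed: "mat 1 \<in> G"
    and mult_closed: "a \<in> G \<Longrightarrow> b \<in> G \<Longrightarrow> a ** b \<in> G"
    and inv_closed: "a \<in> G \<Longrightarrow> matrix_inv a \<in> G"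
begin

lemma phi_pattern: "g \<in> G \<Longrightarrow> monomial_pattern (phi g) g"
  using monomial phi_monomial_pattern by blast

lemma phi_permutes: "g \<in> G \<Longrightarrow> phi g permutes UNIV"
  using monomial phi_monomial_pattern by blast

lemma stabiliser_entry_root_of_unity:
  assumes "k \<in> G" "phi k i = i"
  shows "\<exists>m>0. (k$i$i) ^ m = 1"
proof (rule power_eq_one_if_finite_powers)
  have pattern: "monomial_pattern (phi k) k"
    using assms(1) by (rule phi_pattern)
  then show "k$i$i \<noteq> 0"
    using assms(2) monomial_pattern_nonzero by metis
  define pow where "pow m = ((**) k ^^ m) (mat 1)" for m
  have pow_in_G: "pow m \<in> G" for m
    by (induction m) (simp_all add: pow_def one_closed mult_closed assms(1))
  have "(pow m)$i$i = (k$i$i) ^ m" for m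
    by (induction m) (simp_all add: pow_def mat_def monomial_pattern_mult_entry[OF pattern] assms(2))
  then have "range (power (k$i$i)) = (\<lambda>M. M$i$i) ` range pow"
    by (simp add: image_image)
  moreover have "range pow \<subseteq> G"
    using pow_in_G by blast
  ultimately show "finite (range (power (k$i$i)))"
    using finite by (metis finite_imageI finite_subset)
qed

lemma transported_entry_root_of_unity:
  assumes "u \<in> G" "g \<in> G" "v \<in> G" "phi u i\<^sub>0 = i" "phi v i\<^sub>0 = phi g i"
  shows "\<exists>m>0. (u$i\<^sub>0$i * g$i$(phi g i) * inverse (v$i\<^sub>0$(phi g i))) ^ m = 1"
proof -
  let ?k = "u ** g ** matrix_inv v"
  have "?k \<in> G"
    using assms(1-3) by (simp add: mult_closed inv_closed)
  have pattern_inv_v: "monomial_pattern (inv (phi v)) (matrix_inv v)"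
    and entry_inv_v: "matrix_inv v $ phi g i $ i\<^sub>0 = inverse (v$i\<^sub>0$(phi g i))"
    using matrix_inv_monomial_pattern[OF phi_pattern phi_permutes, OF assms(3) assms(3)] assms(5)
    by metis+
  have pattern_ug: "monomial_pattern (phi g \<circ> phi u) (u ** g)"
    using assms(1,2) by (intro monomial_pattern_mult phi_pattern)
  have "monomial_pattern (inv (phi v) \<circ> (phi g \<circ> phi u)) ?k"
    using pattern_ug pattern_inv_v by (rule monomial_pattern_mult)
  moreover have "(inv (phi v) \<circ> (phi g \<circ> phi u)) i\<^sub>0 = i\<^sub>0"
    using permutes_inverses(2)[OF phi_permutes[OF assms(3)]] by (simp add: assms(4) flip: assms(5))
  ultimately have "phi ?k i\<^sub>0 = i\<^sub>0"
    using \<open>?k \<in> G\<close> phi_pattern monomial_pattern_unique by metis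
  have "?k$i\<^sub>0$i\<^sub>0 = (u ** g)$i\<^sub>0$(phi g i) * matrix_inv v $ phi g i $ i\<^sub>0"
    by (simp add: monomial_pattern_mult_entry[OF pattern_ug] assms(4))
  also have "(u ** g)$i\<^sub>0$(phi g i) = u$i\<^sub>0$i * g$i$(phi g i)"
    by (simp add: monomial_pattern_mult_entry[OF phi_pattern[OF assms(1)]] assms(4))
  finally have "?k$i\<^sub>0$i\<^sub>0 = u$i\<^sub>0$i * g$i$(phi g i) * inverse (v$i\<^sub>0$(phi g i))"
    using entry_inv_v by simp
  with \<open>phi ?k i\<^sub>0 = i\<^sub>0\<close> show ?thesis
    using stabiliser_entry_root_of_unity \<open>?k \<in> G\<close> by metis
qed

lemma diag_conjugate_in_monomial_roots_mats:
  assumes h: "\<And>j. h j \<in> G" "\<And>j. phi (h j) i\<^sub>0 = j" and "g \<in> G"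
  defines "P \<equiv> diag_mat (\<lambda>j. inverse (h j $ i\<^sub>0 $ j))"
  shows "matrix_inv P ** g ** P \<in> monomial_roots_mats"
proof (rule monomial_roots_matsI)
  define c where "c j = h j $ i\<^sub>0 $ j" for j
  have c_nonzero: "c j \<noteq> 0" for j
    unfolding c_def using phi_pattern[OF h(1)] h(2) monomial_pattern_nonzero by metis
  have conj_entry: "(matrix_inv P ** g ** P)$i$k = c i * g$i$k * inverse (c k)" for i k
    unfolding P_def c_def[symmetric]
    by (simp add: matrix_inv_diag_mat c_nonzero diag_mat_mult_entry mult_diag_mat_entry)
  show "phi g permutes UNIV"
    using \<open>g \<in> G\<close> by (rule phi_permutes)
  show "monomial_pattern (phi g) (matrix_inv P ** g ** P)"
    using phi_pattern[OF \<open>g \<in> G\<close>] by (simp add: monomial_pattern_def conj_entry c_nonzero)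
  show "\<exists>m>0. (matrix_inv P ** g ** P)$i$(phi g i) ^ m = 1" for i
    unfolding conj_entry c_def using transported_entry_root_of_unity h \<open>g \<in> G\<close> by metis
qed

end

theorem lemma2p4:
  fixes G :: "('a::field ^ 'n::finite ^ 'n) set"
  assumes "finite G"
    and "G \<subseteq> monomial_mats"
    and "mat 1 \<in> G"
    and "\<forall>a\<in>G. \<forall>b\<in>G. a ** b \<in> G"
    and "\<forall>a\<in>G. matrix_inv a \<in> G"
    and "transitive_perms (phi ` G)"
  shows "\<exists>P\<in>monomial_mats. \<forall>g\<in>G. matrix_inv P ** g ** P \<in> monomial_roots_mats"
proof -
  interpret finite_monomial_group G
    using assms(1-5) by unfold_locales auto
  fix i\<^sub>0 :: 'n
  have "\<exists>g\<in>G. phi g i\<^sub>0 = j" for j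
    using assms(6) unfolding transitive_perms_def by blast
  then obtain h where h: "\<And>j. h j \<in> G" "\<And>j. phi (h j) i\<^sub>0 = j"
    by metis
  have "h j $ i\<^sub>0 $ j \<noteq> 0" for j
    using phi_pattern[OF h(1)] h(2) monomial_pattern_nonzero by metis
  then have "diag_mat (\<lambda>j. inverse (h j $ i\<^sub>0 $ j)) \<in> monomial_mats"
    by (simp add: diag_mat_in_monomial_mats)
  with diag_conjugate_in_monomial_roots_mats[OF h] show ?thesis
    by blast
qed

end
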